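(* Let $a>1$, $k\in\mathbb{N}$, $C_j(n,a)=\binom{n}{j}\left(\frac{1+a}{2}\right)^{n-j}\left(\frac{1-a}{2}\right)^j$, $b_j=-\frac{i}{\sqrt2}(1-\frac{2j}{n})$, $b=-\frac{ia}{\sqrt2}$ and $e_k(z)=z^k/\sqrt{k!}$. Then for every $z\in\mathbb{C}$, $$\lim_{n\to\infty}\sum_{j=0}^nC_j(n,a)\mathcal{W}_{b_j}[e_k](z)=\mathcal{W}_b[e_k](z).$$
   Context: For $c\in\mathbb{C}$ the Weyl operator on the Fock space is $\mathcal{W}_cf(z)=f(z-c)e^{z\bar c-|c|^2/2}$. *)

theory Defs
  imports "HOL-Analysis.Analysis"
begin

definition weyl :: "complex \<Rightarrow> (complex \<Rightarrow> complex) \<Rightarrow> complex \<Rightarrow> complex" where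
  "weyl c f z = f (z - c) * exp (z * cnj c - complex_of_real ((cmod c)^2 / 2))"

definition ek :: "nat \<Rightarrow> complex \<Rightarrow> complex" where
  "ek k z = z ^ k / complex_of_real (sqrt (fact k))"

definition Cco :: "nat \<Rightarrow> nat \<Rightarrow> real \<Rightarrow> real" where
  "Cco j n a = real (n choose j) * ((1 + a) / 2) ^ (n - j) * ((1 - a) / 2) ^ j"

definition bj :: "nat \<Rightarrow> nat \<Rightarrow> complex" where
  "bj n j = - (\<i> / complex_of_real (sqrt 2)) * complex_of_real (1 - 2 * real j / real n)"

definition bb :: "real \<Rightarrow> complex" where
  "bb a = - (\<i> * complex_of_real a / complex_of_real (sqrt 2))"

end

theory Submission
  imports Defs "HOL-Complex_Analysis.Cauchy_Integral_Formula"
begin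

text \<open>
  For real \<open>t\<close> and \<open>c = -i t / sqrt 2\<close>, the value \<open>W\<^sub>c[e\<^sub>k](z)\<close> is \<open>G(t)\<close> for an entire
  function \<open>G\<close>, and the points \<open>b\<^sub>j\<close>, \<open>b\<close> correspond to \<open>t = 1 - 2j/n\<close> and \<open>t = a\<close>.
  Expanding \<open>G\<close> in its Taylor series at \<open>0\<close> turns the sum into \<open>\<Sum>\<^sub>m G\<^sup>(\<^sup>m\<^sup>)(0)/m! \<cdot> \<mu>\<^sub>n(m)\<close>
  with the moments \<open>\<mu>\<^sub>n(m) = \<Sum>\<^sub>j C\<^sub>j(n,a) (1 - 2j/n)\<^sup>m\<close>. These tend to \<open>a\<^sup>m\<close> and are bounded
  by \<open>a\<^sup>m\<close>, so Tannery's theorem gives the limit \<open>G(a)\<close>. Both moment facts follow from a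
  recursion in \<open>m\<close> for \<open>\<Sum>\<^sub>j C\<^sub>j(n,a) (n - 2j)\<^sup>m\<close>, which comes from the absorption identity
  \<open>j binom(n,j) = n binom(n-1,j-1)\<close>.
\<close>

definition Cco_moment :: "real \<Rightarrow> nat \<Rightarrow> nat \<Rightarrow> real" where
  "Cco_moment a n m = (\<Sum>j=0..n. Cco j n a * (real n - 2 * real j) ^ m)"

lemma Cco_moment_0 [simp]: "Cco_moment a n 0 = 1"
proof -
  have "Cco_moment a n 0 = ((1 - a) / 2 + (1 + a) / 2) ^ n"
    unfolding Cco_moment_def Cco_def binomial_ring by (simp add: atLeast0AtMost mult_ac)
  then show ?thesis by (simp add: field_simps)
qed

lemma sum_Cco_Suc_times_index:
  "(\<Sum>j=0..Suc n. Cco j (Suc n) a * real j * f j)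
     = real (Suc n) * ((1 - a) / 2) * (\<Sum>j=0..n. Cco j n a * f (Suc j))"
proof -
  have absorb: "Cco (Suc j) (Suc n) a * real (Suc j) = real (Suc n) * ((1 - a) / 2) * Cco j n a" for j
  proof -
    have "Cco (Suc j) (Suc n) a * real (Suc j)
        = (real (Suc n choose Suc j) * real (Suc j)) * ((1 - a) / 2) * (((1 + a) / 2) ^ (n - j) * ((1 - a) / 2) ^ j)"
      unfolding Cco_def by (simp add: mult_ac del: binomial_Suc_Suc of_nat_Suc)
    also have "real (Suc n choose Suc j) * real (Suc j) = real (Suc n) * real (n choose j)"
      by (metis Suc_times_binomial mult.commute of_nat_mult)
    finally show ?thesis unfolding Cco_def by (simp add: mult_ac)
  qed
  have "(\<Sum>j=0..Suc n. Cco j (Suc n) a * real j * f j)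
      = (\<Sum>j=0..n. Cco (Suc j) (Suc n) a * real (Suc j) * f (Suc j))"
    by (simp only: sum.atLeast0_atMost_Suc_shift) simp
  also have "\<dots> = (\<Sum>j=0..n. real (Suc n) * ((1 - a) / 2) * (Cco j n a * f (Suc j)))"
    by (intro sum.cong refl) (simp only: absorb mult.assoc)
  finally show ?thesis by (simp add: sum_distrib_left)
qed

lemma Cco_moment_Suc_Suc:
  "Cco_moment a (Suc n) (Suc m) = real (Suc n) *
     (Cco_moment a (Suc n) m - (1 - a) * (\<Sum>l\<le>m. real (m choose l) * (-1) ^ l * Cco_moment a n (m - l)))"
proof -
  have shift: "(real (Suc n) - 2 * real (Suc j)) ^ m
      = (\<Sum>l\<le>m. real (m choose l) * (-1) ^ l * (real n - 2 * real j) ^ (m - l))" for j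
    using binomial_ring[of "-1" "real n - 2 * real j" m] by (simp add: algebra_simps)
  have "Cco_moment a (Suc n) (Suc m) = real (Suc n) * Cco_moment a (Suc n) m
      - 2 * (\<Sum>j=0..Suc n. Cco j (Suc n) a * real j * (real (Suc n) - 2 * real j) ^ m)"
    unfolding Cco_moment_def sum_distrib_left sum_subtractf[symmetric]
    by (intro sum.cong) (simp_all add: algebra_simps del: sum.cl_ivl_Suc of_nat_Suc)
  also have "\<dots> = real (Suc n) * (Cco_moment a (Suc n) m
      - (1 - a) * (\<Sum>j=0..n. Cco j n a * (real (Suc n) - 2 * real (Suc j)) ^ m))"
    unfolding sum_Cco_Suc_times_index by (simp add: field_simps)
  also have "\<dots> = real (Suc n) *
     (Cco_moment a (Suc n) m - (1 - a) * (\<Sum>l\<le>m. real (m choose l) * (-1) ^ l * Cco_moment a n (m - l)))"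
    unfolding Cco_moment_def shift sum_distrib_left by (subst sum.swap) (simp add: mult_ac)
  finally show ?thesis .
qed

text \<open>
  For \<open>a > 1\<close> the weights \<open>C\<^sub>j(n,a)\<close> alternate in sign with \<open>\<Sum>\<^sub>j |C\<^sub>j(n,a)| = a\<^sup>n\<close>, so this
  bound cannot come from the triangle inequality over \<open>j\<close>; it comes from the recursion, using
  \<open>n a + 1 \<le> (n + 1) a\<close>.
\<close>
lemma abs_Cco_moment_le:
  assumes "a \<ge> 1"
  shows "\<bar>Cco_moment a n m\<bar> \<le> (real n * a) ^ m"
proof (induction m arbitrary: n rule: less_induct)
  case (less m)
  consider "n = 0" | n' where "n = Suc n'" "m = 0" | n' m' where "n = Suc n'" "m = Suc m'"
    by (metis not0_implies_Suc)
  then show ?case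
  proof cases
    case 1
    then show ?thesis by (simp add: Cco_moment_def Cco_def)
  next
    case 2
    then show ?thesis by simp
  next
    case (3 n' m')
    let ?x = "real (Suc n') * a"
    let ?T = "\<Sum>l\<le>m'. real (m' choose l) * (-1) ^ l * Cco_moment a n' (m' - l)"
    have "\<bar>?T\<bar> \<le> (\<Sum>l\<le>m'. real (m' choose l) * \<bar>Cco_moment a n' (m' - l)\<bar>)"
      by (rule order_trans[OF sum_abs]) (simp add: abs_mult)
    also have "\<dots> \<le> (\<Sum>l\<le>m'. real (m' choose l) * (real n' * a) ^ (m' - l))"
      using less.IH 3 by (intro sum_mono mult_left_mono) auto
    also have "\<dots> = (1 + real n' * a) ^ m'"
      by (simp add: binomial_ring)
    also have "\<dots> \<le> ?x ^ m'"
      using assms by (intro power_mono) (auto simp: algebra_simps)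
    finally have T: "\<bar>?T\<bar> \<le> ?x ^ m'" .
    have "\<bar>Cco_moment a n m\<bar> = real (Suc n') * \<bar>Cco_moment a (Suc n') m' - (1 - a) * ?T\<bar>"
      using 3 by (simp only: Cco_moment_Suc_Suc abs_mult abs_of_nat)
    also have "\<dots> \<le> real (Suc n') * (\<bar>Cco_moment a (Suc n') m'\<bar> + (a - 1) * \<bar>?T\<bar>)"
      using abs_triangle_ineq4[of "Cco_moment a (Suc n') m'" "(1 - a) * ?T"] assms
      by (intro mult_left_mono) (simp_all add: abs_mult)
    also have "\<dots> \<le> real (Suc n') * (?x ^ m' + (a - 1) * ?x ^ m')"
      using less.IH[of m' "Suc n'"] 3 T assms by (intro mult_left_mono add_mono) auto
    also have "\<dots> = (real n * a) ^ m"
      using 3 by (simp add: algebra_simps)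
    finally show ?thesis .
  qed
qed

lemma Cco_moment_over_power_tendsto: "(\<lambda>n. Cco_moment a n m / real n ^ m) \<longlonglongrightarrow> a ^ m"
proof (induction m rule: less_induct)
  case (less m)
  show ?case
  proof (cases m)
    case 0
    then show ?thesis by simp
  next
    case (Suc m')
    have scale: "(\<lambda>n. real n ^ (m' - l) / real (Suc n) ^ m') \<longlonglongrightarrow> 0 ^ l" if "l \<le> m'" for l
    proof -
      have "(\<lambda>n. (real n / real (Suc n)) ^ (m' - l) * (1 / real (Suc n)) ^ l) \<longlonglongrightarrow> 1 ^ (m' - l) * 0 ^ l"
        by (intro tendsto_intros LIMSEQ_n_over_Suc_n LIMSEQ_Suc[OF lim_1_over_n])
      moreover have "(real n / real (Suc n)) ^ (m' - l) * (1 / real (Suc n)) ^ l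
          = real n ^ (m' - l) / real (Suc n) ^ m'" for n
        using that by (simp add: power_divide flip: power_add)
      ultimately show ?thesis by simp
    qed
    have lower: "(\<lambda>n. Cco_moment a n (m' - l) / real (Suc n) ^ m') \<longlonglongrightarrow> a ^ (m' - l) * 0 ^ l"
      if "l \<le> m'" for l
    proof (rule Lim_transform_eventually)
      show "(\<lambda>n. Cco_moment a n (m' - l) / real n ^ (m' - l) * (real n ^ (m' - l) / real (Suc n) ^ m'))
          \<longlonglongrightarrow> a ^ (m' - l) * 0 ^ l"
        using less.IH[of "m' - l"] Suc scale[OF that] by (intro tendsto_mult) auto
      show "\<forall>\<^sub>F n in sequentially. Cco_moment a n (m' - l) / real n ^ (m' - l) * (real n ^ (m' - l) / real (Suc n) ^ m')
          = Cco_moment a n (m' - l) / real (Suc n) ^ m'"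
        using eventually_gt_at_top[of 0] by eventually_elim simp
    qed
    have "(\<lambda>n. Cco_moment a (Suc n) m' / real (Suc n) ^ m'
        - (1 - a) * (\<Sum>l\<le>m'. real (m' choose l) * (-1) ^ l * (Cco_moment a n (m' - l) / real (Suc n) ^ m')))
        \<longlonglongrightarrow> a ^ m' - (1 - a) * (\<Sum>l\<le>m'. real (m' choose l) * (-1) ^ l * (a ^ (m' - l) * 0 ^ l))"
      using less.IH[of m'] Suc lower
      by (intro tendsto_intros filterlim_sequentially_Suc[THEN iffD2]) auto
    also have "(\<Sum>l\<le>m'. real (m' choose l) * (-1) ^ l * (a ^ (m' - l) * 0 ^ l)) = a ^ m'"
      by (cases m') (simp_all add: sum.atMost_Suc_shift del: sum.atMost_Suc)
    also have "(\<lambda>n. Cco_moment a (Suc n) m' / real (Suc n) ^ m'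
        - (1 - a) * (\<Sum>l\<le>m'. real (m' choose l) * (-1) ^ l * (Cco_moment a n (m' - l) / real (Suc n) ^ m')))
        = (\<lambda>n. Cco_moment a (Suc n) (Suc m') / real (Suc n) ^ Suc m')"
      by (simp add: Cco_moment_Suc_Suc diff_divide_distrib mult.assoc flip: sum_divide_distrib del: of_nat_Suc)
    finally have "(\<lambda>n. Cco_moment a (Suc n) (Suc m') / real (Suc n) ^ Suc m') \<longlonglongrightarrow> a ^ Suc m'"
      by (simp add: algebra_simps)
    then show ?thesis
      using Suc filterlim_sequentially_Suc by blast
  qed
qed

lemma sum_Cco_power_eq_Cco_moment:
  assumes "n > 0"
  shows "(\<Sum>j=0..n. Cco j n a * (1 - 2 * real j / real n) ^ m) = Cco_moment a n m / real n ^ m"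
proof -
  have "1 - 2 * real j / real n = (real n - 2 * real j) / real n" for j
    using assms by (simp add: field_simps)
  then show ?thesis
    unfolding Cco_moment_def sum_divide_distrib by (simp add: power_divide)
qed

lemma sum_Cco_power_tendsto:
  "(\<lambda>n. \<Sum>j=0..n. Cco j n a * (1 - 2 * real j / real n) ^ m) \<longlonglongrightarrow> a ^ m"
proof (rule Lim_transform_eventually)
  show "\<forall>\<^sub>F n in sequentially. Cco_moment a n m / real n ^ m
      = (\<Sum>j=0..n. Cco j n a * (1 - 2 * real j / real n) ^ m)"
    using eventually_gt_at_top[of 0] by eventually_elim (simp add: sum_Cco_power_eq_Cco_moment)
qed (rule Cco_moment_over_power_tendsto)

lemma abs_sum_Cco_power_le:
  assumes "a \<ge> 1"
  shows "\<bar>\<Sum>j=0..n. Cco j n a * (1 - 2 * real j / real n) ^ m\<bar> \<le> a ^ m"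
proof (cases "n = 0")
  case True
  then show ?thesis using assms by (simp add: Cco_def one_le_power)
next
  case False
  then have "\<bar>\<Sum>j=0..n. Cco j n a * (1 - 2 * real j / real n) ^ m\<bar> = \<bar>Cco_moment a n m\<bar> / real n ^ m"
    by (simp add: sum_Cco_power_eq_Cco_moment abs_divide)
  also have "\<dots> \<le> (real n * a) ^ m / real n ^ m"
    using abs_Cco_moment_le[OF assms] by (intro divide_right_mono) auto
  also have "\<dots> = a ^ m"
    using False by (simp add: power_mult_distrib)
  finally show ?thesis .
qed

lemma tendsto_sum_entire_of_moments:
  fixes G :: "complex \<Rightarrow> complex" and w x :: "nat \<Rightarrow> 'i \<Rightarrow> complex"
  assumes entire: "G holomorphic_on UNIV"
    and moments: "\<And>m. (\<lambda>n. \<Sum>j\<in>I n. w n j * x n j ^ m) \<longlonglongrightarrow> a ^ m"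
    and bounded: "\<forall>\<^sub>F n in sequentially. \<forall>m. norm (\<Sum>j\<in>I n. w n j * x n j ^ m) \<le> B ^ m"
  shows "(\<lambda>n. \<Sum>j\<in>I n. w n j * G (x n j)) \<longlonglongrightarrow> G a"
proof -
  define c where "c m = (deriv ^^ m) G 0 / fact m" for m
  define \<mu> where "\<mu> n m = (\<Sum>j\<in>I n. w n j * x n j ^ m)" for n m
  have taylor: "(\<lambda>m. c m * y ^ m) sums G y" for y
    using holomorphic_power_series[of G 0 "norm y + 1" y] holomorphic_on_subset[OF entire]
    by (simp add: c_def)
  have summable: "summable (\<lambda>m. norm (c m) * \<bar>B\<bar> ^ m)"
  proof -
    have "summable (\<lambda>m. norm (c m * of_real \<bar>B\<bar> ^ m))"
      by (rule powser_insidea[of c "of_real (\<bar>B\<bar> + 1)"]) (use taylor sums_summable in auto)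
    then show ?thesis by (simp add: norm_mult norm_power)
  qed
  have expand: "(\<lambda>m. c m * \<mu> n m) sums (\<Sum>j\<in>I n. w n j * G (x n j))" for n
  proof -
    have "(\<lambda>m. \<Sum>j\<in>I n. w n j * (c m * x n j ^ m)) sums (\<Sum>j\<in>I n. w n j * G (x n j))"
      by (intro sums_sum sums_mult taylor)
    then show ?thesis
      by (simp add: \<mu>_def sum_distrib_left mult_ac)
  qed
  have "(\<lambda>n. \<Sum>m. c m * \<mu> n m) \<longlonglongrightarrow> (\<Sum>m. c m * a ^ m)"
  proof -
    have dominated: "norm (c m * \<mu> n m) \<le> norm (c m) * \<bar>B\<bar> ^ m"
      if "\<forall>m. norm (\<mu> n m) \<le> B ^ m" for n m
      using that abs_ge_self[of "B ^ m"] power_abs[of B m]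
      by (auto simp: norm_mult intro!: mult_left_mono elim: order_trans)
    have "\<forall>\<^sub>F (m :: nat, n) in at_top \<times>\<^sub>F sequentially. \<forall>m. norm (\<mu> n m) \<le> B ^ m"
      using bounded by (subst eventually_prod2) (simp_all add: \<mu>_def)
    then have "\<forall>\<^sub>F (m, n) in at_top \<times>\<^sub>F sequentially. norm (c m * \<mu> n m) \<le> norm (c m) * \<bar>B\<bar> ^ m"
      by (rule eventually_mono) (auto intro: dominated)
    moreover have "(\<lambda>n. c m * \<mu> n m) \<longlonglongrightarrow> c m * a ^ m" for m
      unfolding \<mu>_def by (intro tendsto_mult_left moments)
    ultimately show ?thesis
      using tannerys_theorem[where a = "\<lambda>m n. c m * \<mu> n m" and b = "\<lambda>m. c m * a ^ m"] summable
      by simp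
  qed
  then show ?thesis
    using expand taylor by (simp add: sums_iff)
qed

lemma weyl_imaginary_axis:
  "weyl (- (\<i> / of_real (sqrt 2)) * of_real t) f z
     = f (z + \<i> * of_real t / of_real (sqrt 2)) * exp (\<i> * z * of_real t / of_real (sqrt 2) - of_real t ^ 2 / 4)"
proof -
  let ?c = "- (\<i> / of_real (sqrt 2)) * complex_of_real t"
  have shift: "z - ?c = z + \<i> * of_real t / of_real (sqrt 2)"
    by simp
  have phase: "z * cnj ?c = \<i> * z * of_real t / of_real (sqrt 2)"
    by simp
  have gauss: "complex_of_real ((cmod ?c)\<^sup>2 / 2) = of_real t ^ 2 / 4"
    by (simp add: norm_mult norm_divide power_mult_distrib power_divide)
  show ?thesis
    unfolding weyl_def shift phase gauss ..
qed

theorem theorem3p24: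
  fixes a :: real and k :: nat and z :: complex
  assumes "a > 1"
  shows "(\<lambda>n. \<Sum>j=0..n. complex_of_real (Cco j n a) * weyl (bj n j) (ek k) z)
           \<longlonglongrightarrow> weyl (bb a) (ek k) z"
proof -
  define G where
    "G w = ek k (z + \<i> * w / of_real (sqrt 2)) * exp (\<i> * z * w / of_real (sqrt 2) - w ^ 2 / 4)" for w
  have "G holomorphic_on UNIV"
    unfolding G_def ek_def by (intro holomorphic_intros) auto
  moreover have "(\<lambda>n. \<Sum>j=0..n. complex_of_real (Cco j n a) * of_real (1 - 2 * real j / real n) ^ m)
      \<longlonglongrightarrow> of_real a ^ m" for m
    unfolding of_real_power[symmetric] of_real_mult[symmetric] of_real_sum[symmetric]
    by (intro tendsto_of_real sum_Cco_power_tendsto)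
  moreover have "\<forall>\<^sub>F n in sequentially. \<forall>m.
      norm (\<Sum>j=0..n. complex_of_real (Cco j n a) * of_real (1 - 2 * real j / real n) ^ m) \<le> a ^ m"
    using abs_sum_Cco_power_le assms
    unfolding of_real_power[symmetric] of_real_mult[symmetric] of_real_sum[symmetric] norm_of_real
    by simp
  ultimately have "(\<lambda>n. \<Sum>j=0..n. of_real (Cco j n a) * G (of_real (1 - 2 * real j / real n))) \<longlonglongrightarrow> G (of_real a)"
    by (rule tendsto_sum_entire_of_moments)
  moreover have "weyl (bj n j) (ek k) z = G (of_real (1 - 2 * real j / real n))" for n j
    unfolding bj_def weyl_imaginary_axis G_def ..
  moreover have "weyl (bb a) (ek k) z = G (of_real a)"
    using weyl_imaginary_axis[of a] unfolding bb_def G_def by simp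
  ultimately show ?thesis by simp
qed

end
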